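(* Let $\{e_i\}_{i=1}^\infty$ be the canonical orthonormal basis of the real Hilbert space $\ell_2$, and let $a_i\neq0$ ($i=1,2,\dots$) be real numbers with $\sum_{i=1}^\infty a_i^2<\infty$. Define $x_k=a_k(e_1+e_{k+1})$ for $k=1,2,\dots$, and let $L$ be the right shift operator on $\ell_2$, $L(c_1,c_2,\dots)=(0,c_1,c_2,\dots)$. Then the family \[ \{e_i\}_{i=1}^\infty\cup\{2^{-i}L^ix_k\}_{i=0,\,k=1}^{\infty,\ \infty}\] is a frame for $\ell_2$ which is injective.
   Context: A family $\{y_k\}$ in $\ell_2$ is called injective if whenever a Hilbert–Schmidt self-adjoint operator $T$ on $\ell_2$ satisfies $\langle Ty_k,y_k\rangle=0$ for all $k$, then $T=0$. *)

theory Defs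
  imports "HOL-Analysis.Analysis"
begin

text \<open>The real Hilbert space l2, realised as square-summable real sequences
  indexed from 0 (so the paper's e_1 is index 0 here).\<close>

definition l2 :: "(nat \<Rightarrow> real) set" where
  "l2 = {x. summable (\<lambda>i. (x i)\<^sup>2)}"

definition ip :: "(nat \<Rightarrow> real) \<Rightarrow> (nat \<Rightarrow> real) \<Rightarrow> real" where
  "ip x y = (\<Sum>i. x i * y i)"

definition basis :: "nat \<Rightarrow> nat \<Rightarrow> real" where
  "basis i = (\<lambda>j. if j = i then 1 else 0)"

definition shift :: "(nat \<Rightarrow> real) \<Rightarrow> nat \<Rightarrow> real" where
  "shift c = (\<lambda>n. case n of 0 \<Rightarrow> 0 | Suc m \<Rightarrow> c m)"

definition is_frame :: "('j \<Rightarrow> (nat \<Rightarrow> real)) \<Rightarrow> bool" where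
  "is_frame y \<longleftrightarrow> (\<forall>j. y j \<in> l2) \<and>
     (\<exists>A B. 0 < A \<and> A \<le> B \<and>
        (\<forall>x\<in>l2. (\<lambda>j. (ip x (y j))\<^sup>2) summable_on UNIV \<and>
                 A * ip x x \<le> (\<Sum>\<^sub>\<infinity>j. (ip x (y j))\<^sup>2) \<and>
                 (\<Sum>\<^sub>\<infinity>j. (ip x (y j))\<^sup>2) \<le> B * ip x x))"

definition bounded_op_l2 :: "((nat \<Rightarrow> real) \<Rightarrow> (nat \<Rightarrow> real)) \<Rightarrow> bool" where
  "bounded_op_l2 T \<longleftrightarrow> (\<forall>x\<in>l2. T x \<in> l2) \<and>
     (\<forall>x\<in>l2. \<forall>y\<in>l2. T (\<lambda>i. x i + y i) = (\<lambda>i. T x i + T y i)) \<and>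
     (\<forall>x\<in>l2. \<forall>c. T (\<lambda>i. c * x i) = (\<lambda>i. c * T x i)) \<and>
     (\<exists>C. \<forall>x\<in>l2. ip (T x) (T x) \<le> C * ip x x)"

definition hilbert_schmidt :: "((nat \<Rightarrow> real) \<Rightarrow> (nat \<Rightarrow> real)) \<Rightarrow> bool" where
  "hilbert_schmidt T \<longleftrightarrow> bounded_op_l2 T \<and>
     summable (\<lambda>i. ip (T (basis i)) (T (basis i)))"

definition self_adjoint_l2 :: "((nat \<Rightarrow> real) \<Rightarrow> (nat \<Rightarrow> real)) \<Rightarrow> bool" where
  "self_adjoint_l2 T \<longleftrightarrow> (\<forall>x\<in>l2. \<forall>y\<in>l2. ip (T x) y = ip x (T y))"

definition injective_family :: "('j \<Rightarrow> (nat \<Rightarrow> real)) \<Rightarrow> bool" where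
  "injective_family y \<longleftrightarrow>
     (\<forall>T. hilbert_schmidt T \<and> self_adjoint_l2 T \<and> (\<forall>k. ip (T (y k)) (y k) = 0)
          \<longrightarrow> (\<forall>x\<in>l2. T x = (\<lambda>_. 0)))"

text \<open>x_k = a_k (e_1 + e_{k+1}); with 0-indexing k \<mapsto> k, e_1 \<mapsto> basis 0,
  e_{k+1} \<mapsto> basis (Suc k).\<close>
definition xvec :: "(nat \<Rightarrow> real) \<Rightarrow> nat \<Rightarrow> nat \<Rightarrow> real" where
  "xvec a k = (\<lambda>j. a k * (basis 0 j + basis (Suc k) j))"

definition fam :: "(nat \<Rightarrow> real) \<Rightarrow> nat + nat \<times> nat \<Rightarrow> nat \<Rightarrow> real" where
  "fam a s = (case s of Inl i \<Rightarrow> basis i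
                | Inr (i, k) \<Rightarrow> (\<lambda>j. (1 / 2 ^ i) * (shift ^^ i) (xvec a k) j))"

end

theory Submission
  imports Defs
begin

text \<open>The vector 2^-i L^i x_k is a nonzero multiple of e_i + e_(i+k+1), and every pair
  i < j has the form (i, i+k+1). For a self-adjoint T the quadratic form at e_i + e_j is
  T_ii + T_jj + 2 T_ij, so vanishing on the basis vectors and on these vectors forces the
  whole matrix of T to vanish. The basis vectors also give the lower frame bound 1, and
  (ip x (2^-i L^i x_k))^2 \<le> 4 * 4^-i a_k^2 ||x||^2 is summable over (i, k) since the
  a_k are square summable, which gives the upper bound.\<close>

lemma ip_finite_support:
  assumes "finite N" "\<And>n. n \<notin> N \<Longrightarrow> y n = 0"
  shows "ip x y = (\<Sum>n\<in>N. x n * y n)"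
  unfolding ip_def using assms by (intro suminf_finite) auto

lemma l2_finite_support:
  assumes "finite N" "\<And>n. n \<notin> N \<Longrightarrow> y n = 0"
  shows "y \<in> l2"
  unfolding l2_def using assms by (auto intro!: summable_finite)

lemma ip_commute: "ip x y = ip y x"
  unfolding ip_def by (simp add: mult.commute)

lemma ip_basis_right: "ip x (basis n) = x n"
  by (subst ip_finite_support[of "{n}"]) (auto simp: basis_def)

lemma ip_basis_left: "ip (basis n) x = x n"
  using ip_basis_right ip_commute by metis

lemma basis_in_l2: "basis n \<in> l2"
  by (rule l2_finite_support[of "{n}"]) (auto simp: basis_def)

lemma ip_self_eq_suminf: "ip x x = (\<Sum>i. (x i)\<^sup>2)"
  unfolding ip_def by (simp add: power2_eq_square)

lemma sum_sq_le_ip_self: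
  assumes "x \<in> l2" "finite I"
  shows "(\<Sum>i\<in>I. (x i)\<^sup>2) \<le> ip x x"
  unfolding ip_self_eq_suminf using assms by (intro sum_le_suminf) (auto simp: l2_def)

lemma component_sq_le_ip_self:
  assumes "x \<in> l2"
  shows "(x n)\<^sup>2 \<le> ip x x"
  using sum_sq_le_ip_self[OF assms, of "{n}"] by simp

lemma ip_self_nonneg:
  assumes "x \<in> l2"
  shows "0 \<le> ip x x"
  using component_sq_le_ip_self[OF assms, of 0] by (meson order.trans zero_le_power2)

lemma sum_product_le_suminf_product:
  fixes f g :: "nat \<Rightarrow> real"
  assumes "summable f" "summable g" "\<And>i. 0 \<le> f i" "\<And>k. 0 \<le> g k" "finite P"
  shows "(\<Sum>(i, k)\<in>P. f i * g k) \<le> (\<Sum>i. f i) * (\<Sum>k. g k)"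
proof -
  have "(\<Sum>(i, k)\<in>P. f i * g k) \<le> (\<Sum>(i, k)\<in>fst ` P \<times> snd ` P. f i * g k)"
    using assms by (intro sum_mono2) (force intro: mult_nonneg_nonneg)+
  also have "\<dots> = (\<Sum>i\<in>fst ` P. f i) * (\<Sum>k\<in>snd ` P. g k)"
    by (simp add: sum_product sum.cartesian_product)
  also have "\<dots> \<le> (\<Sum>i. f i) * (\<Sum>k. g k)"
    using assms by (intro mult_mono sum_le_suminf suminf_nonneg sum_nonneg) auto
  finally show ?thesis .
qed

lemma self_adjoint_matrix_symmetric:
  assumes "self_adjoint_l2 T"
  shows "T (basis i) j = T (basis j) i"
  using assms basis_in_l2 unfolding self_adjoint_l2_def by (metis ip_basis_left ip_basis_right)

lemma self_adjoint_eq_zero_if_matrix_zero: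
  assumes "self_adjoint_l2 T" "\<And>i j. T (basis i) j = 0" "x \<in> l2"
  shows "T x = (\<lambda>_. 0)"
proof
  fix n
  have "T x n = ip (T x) (basis n)" by (simp add: ip_basis_right)
  also have "\<dots> = ip x (T (basis n))"
    using assms(1,3) basis_in_l2 unfolding self_adjoint_l2_def by blast
  also have "\<dots> = 0" using assms(2) by (simp add: ip_def)
  finally show "T x n = 0" .
qed

lemma quadratic_form_basis_pair:
  fixes c :: real
  assumes T: "bounded_op_l2 T" and "i \<noteq> j"
  defines "v \<equiv> \<lambda>n. c * (basis i n + basis j n)"
  shows "ip (T v) v = c\<^sup>2 * (T (basis i) i + T (basis j) j + T (basis i) j + T (basis j) i)"
proof -
  have "(\<lambda>n. basis i n + basis j n) \<in> l2"
    by (rule l2_finite_support[of "{i, j}"]) (auto simp: basis_def)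
  then have Tv: "T v = (\<lambda>n. c * (T (basis i) n + T (basis j) n))"
    using T basis_in_l2 unfolding v_def bounded_op_l2_def by simp
  have "v i = c" "v j = c"
    using \<open>i \<noteq> j\<close> by (auto simp: v_def basis_def)
  have "ip (T v) v = (\<Sum>n\<in>{i, j}. T v n * v n)"
    by (rule ip_finite_support) (auto simp: v_def basis_def)
  also have "\<dots> = T v i * c + T v j * c"
    using \<open>i \<noteq> j\<close> \<open>v i = c\<close> \<open>v j = c\<close> by simp
  also have "\<dots> = c\<^sup>2 * (T (basis i) i + T (basis j) j + T (basis i) j + T (basis j) i)"
    unfolding Tv by (simp add: power2_eq_square algebra_simps)
  finally show ?thesis .
qed

lemma injective_family_if_basis_and_pairs:
  assumes basis: "\<And>i. \<exists>s. y s = basis i"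
    and pairs: "\<And>i j. i < j \<Longrightarrow> \<exists>s c. c \<noteq> 0 \<and> y s = (\<lambda>n. c * (basis i n + basis j n))"
  shows "injective_family y"
  unfolding injective_family_def
proof (intro allI impI ballI)
  fix T x
  assume "hilbert_schmidt T \<and> self_adjoint_l2 T \<and> (\<forall>s. ip (T (y s)) (y s) = 0)"
  then have T: "bounded_op_l2 T" and sa: "self_adjoint_l2 T"
    and form_zero: "\<And>s. ip (T (y s)) (y s) = 0"
    unfolding hilbert_schmidt_def by auto
  have diag: "T (basis i) i = 0" for i
    using basis[of i] form_zero by (metis ip_basis_right)
  have off_diag: "T (basis j) i = 0" if ij: "i < j" for i j
  proof -
    obtain s c where "c \<noteq> 0" and s: "y s = (\<lambda>n. c * (basis i n + basis j n))"
      using pairs[OF ij] by blast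
    have "0 = c\<^sup>2 * (2 * T (basis j) i)"
      using form_zero[of s] quadratic_form_basis_pair[OF T, of i j c] ij
        diag[of i] diag[of j] self_adjoint_matrix_symmetric[OF sa, of i j]
      by (simp add: s)
    then show ?thesis using \<open>c \<noteq> 0\<close> by simp
  qed
  have "T (basis j) i = 0" for i j
    using off_diag[of i j] off_diag[of j i] diag[of i] self_adjoint_matrix_symmetric[OF sa, of i j]
    by (metis linorder_neqE_nat)
  then show "x \<in> l2 \<Longrightarrow> T x = (\<lambda>_. 0)"
    using self_adjoint_eq_zero_if_matrix_zero[OF sa] by blast
qed

lemma is_frame_if_basis_and_finite_sums_bounded:
  assumes l2: "\<And>s. y s \<in> l2"
    and "inj b" and basis: "\<And>i. y (b i) = basis i"
    and "1 \<le> B"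
    and bounded: "\<And>x F. x \<in> l2 \<Longrightarrow> finite F \<Longrightarrow> (\<Sum>s\<in>F. (ip x (y s))\<^sup>2) \<le> B * ip x x"
  shows "is_frame y"
proof -
  have "(\<lambda>s. (ip x (y s))\<^sup>2) summable_on UNIV
      \<and> 1 * ip x x \<le> (\<Sum>\<^sub>\<infinity>s. (ip x (y s))\<^sup>2)
      \<and> (\<Sum>\<^sub>\<infinity>s. (ip x (y s))\<^sup>2) \<le> B * ip x x" if x: "x \<in> l2" for x
  proof (intro conjI)
    let ?g = "\<lambda>s. (ip x (y s))\<^sup>2"
    show summable: "?g summable_on UNIV"
      using bounded[OF x] by (intro nonneg_bdd_above_summable_on) (auto simp: bdd_above_def)
    show "(\<Sum>\<^sub>\<infinity>s. ?g s) \<le> B * ip x x"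
      using bounded[OF x] by (intro infsum_le_finite_sums[OF summable]) auto
    have "(\<Sum>i<N. (x i)\<^sup>2) \<le> (\<Sum>\<^sub>\<infinity>s. ?g s)" for N
    proof -
      have "(\<Sum>i<N. (x i)\<^sup>2) = sum ?g (b ` {..<N})"
        using \<open>inj b\<close> by (simp add: sum.reindex inj_on_subset basis ip_basis_right)
      also have "\<dots> \<le> (\<Sum>\<^sub>\<infinity>s. ?g s)"
        by (intro finite_sum_le_infsum[OF summable]) auto
      finally show ?thesis .
    qed
    then show "1 * ip x x \<le> (\<Sum>\<^sub>\<infinity>s. ?g s)"
      using x unfolding ip_self_eq_suminf l2_def by (simp add: suminf_le_const)
  qed
  then show ?thesis
    unfolding is_frame_def using l2 \<open>1 \<le> B\<close> by (intro conjI exI[of _ 1] exI[of _ B]) auto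
qed

lemma shift_power_apply: "(shift ^^ i) g j = (if j < i then 0 else g (j - i))"
proof (induction i arbitrary: j)
  case (Suc i) then show ?case by (cases j) (auto simp: shift_def)
qed simp

lemma fam_Inl: "fam a (Inl i) = basis i"
  by (simp add: fam_def)

lemma fam_Inr: "fam a (Inr (i, k)) = (\<lambda>n. (a k / 2 ^ i) * (basis i n + basis (Suc (i + k)) n))"
  unfolding fam_def by (rule ext) (auto simp: shift_power_apply xvec_def basis_def)

lemma fam_in_l2: "fam a s \<in> l2"
proof (cases s)
  case (Inr p)
  then obtain i k where "s = Inr (i, k)" by (cases p) auto
  show ?thesis
    unfolding \<open>s = Inr (i, k)\<close> fam_Inr
    by (rule l2_finite_support[of "{i, Suc (i + k)}"]) (auto simp: basis_def)
qed (simp add: fam_Inl basis_in_l2)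

lemma ip_fam_Inr: "ip x (fam a (Inr (i, k))) = a k / 2 ^ i * (x i + x (Suc (i + k)))"
proof -
  have "ip x (fam a (Inr (i, k))) = (\<Sum>n\<in>{i, Suc (i + k)}. x n * fam a (Inr (i, k)) n)"
    by (rule ip_finite_support) (auto simp: fam_Inr basis_def)
  then show ?thesis
    by (simp add: fam_Inr basis_def algebra_simps add_divide_distrib)
qed

lemma ip_fam_Inr_sq_le:
  assumes "x \<in> l2"
  shows "(ip x (fam a (Inr (i, k))))\<^sup>2 \<le> 4 * ip x x * ((1 / 4) ^ i * (a k)\<^sup>2)"
proof -
  have "(x i + x (Suc (i + k)))\<^sup>2 \<le> 2 * (x i)\<^sup>2 + 2 * (x (Suc (i + k)))\<^sup>2"
    by (smt (verit) zero_le_power2 power2_diff power2_sum)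
  also have "\<dots> \<le> 4 * ip x x"
    using component_sq_le_ip_self[OF assms, of i] component_sq_le_ip_self[OF assms, of "Suc (i + k)"]
    by simp
  finally have "(1 / 4) ^ i * (a k)\<^sup>2 * (x i + x (Suc (i + k)))\<^sup>2 \<le> (1 / 4) ^ i * (a k)\<^sup>2 * (4 * ip x x)"
    by (intro mult_left_mono) auto
  moreover have "(ip x (fam a (Inr (i, k))))\<^sup>2 = (1 / 4) ^ i * (a k)\<^sup>2 * (x i + x (Suc (i + k)))\<^sup>2"
    by (simp add: ip_fam_Inr power_mult_distrib power_divide power_mult[symmetric]
        mult.commute[of i] power_mult power_one_over)
  ultimately show ?thesis
    by (simp add: mult_ac)
qed

lemma sum_sq_ip_fam_le:
  assumes "summable (\<lambda>k. (a k)\<^sup>2)" "x \<in> l2" "finite F"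
  shows "(\<Sum>s\<in>F. (ip x (fam a s))\<^sup>2) \<le> (1 + 16 / 3 * (\<Sum>k. (a k)\<^sup>2)) * ip x x"
proof -
  let ?g = "\<lambda>s. (ip x (fam a s))\<^sup>2"
  define I where "I = Inl -` F"
  define P where "P = Inr -` F"
  have finite: "finite I" "finite P"
    using \<open>finite F\<close> by (auto simp: I_def P_def finite_vimageI)
  have "F = Inl ` I \<union> Inr ` P"
    unfolding I_def P_def
    by (metis UNIV_sum image_vimage_eq inf_sup_distrib1 inf_top.right_neutral)
  then have "sum ?g F = sum ?g (Inl ` I) + sum ?g (Inr ` P)"
    using finite by (simp only:) (rule sum.union_disjoint; auto)
  also have "sum ?g (Inl ` I) = (\<Sum>i\<in>I. (x i)\<^sup>2)"
    by (simp add: sum.reindex fam_Inl ip_basis_right)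
  also have "\<dots> \<le> ip x x"
    using assms finite by (intro sum_sq_le_ip_self)
  also have "sum ?g (Inr ` P) = (\<Sum>p\<in>P. ?g (Inr p))"
    by (simp add: sum.reindex)
  also have "\<dots> \<le> (\<Sum>(i, k)\<in>P. 4 * ip x x * ((1 / 4) ^ i * (a k)\<^sup>2))"
    using ip_fam_Inr_sq_le[OF assms(2)] by (intro sum_mono) auto
  also have "\<dots> = 4 * ip x x * (\<Sum>(i, k)\<in>P. (1 / 4) ^ i * (a k)\<^sup>2)"
    by (simp add: sum_distrib_left case_prod_unfold)
  also have "\<dots> \<le> 4 * ip x x * ((\<Sum>i. (1 / 4 :: real) ^ i) * (\<Sum>k. (a k)\<^sup>2))"
    using assms finite ip_self_nonneg
    by (intro mult_left_mono sum_product_le_suminf_product) auto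
  also have "(\<Sum>i. (1 / 4 :: real) ^ i) = 4 / 3"
    by (subst suminf_geometric) auto
  finally show ?thesis
    by (simp add: algebra_simps)
qed

theorem mainTheorem14:
  fixes a :: "nat \<Rightarrow> real"
  assumes "\<forall>k. a k \<noteq> 0"
    and "summable (\<lambda>k. (a k)\<^sup>2)"
  shows "is_frame (fam a) \<and> injective_family (fam a)"
proof
  have "0 \<le> (\<Sum>k. (a k)\<^sup>2)"
    using assms(2) by (intro suminf_nonneg) auto
  then show "is_frame (fam a)"
    using sum_sq_ip_fam_le[OF assms(2)] fam_in_l2 fam_Inl
    by (intro is_frame_if_basis_and_finite_sums_bounded[where b = Inl
          and B = "1 + 16 / 3 * (\<Sum>k. (a k)\<^sup>2)"]) auto
  have "\<exists>s c. c \<noteq> 0 \<and> fam a s = (\<lambda>n. c * (basis i n + basis j n))" if "i < j" for i j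
    using assms(1) that fam_Inr[of a i "j - Suc i"]
    by (intro exI[of _ "Inr (i, j - Suc i)"] exI[of _ "a (j - Suc i) / 2 ^ i"]) auto
  then show "injective_family (fam a)"
    using fam_Inl by (intro injective_family_if_basis_and_pairs) metis+
qed

end
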